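(* Let $Q\in\mathcal N_\kappa(\mathcal H)$ have the realization $Q(z)=Q(z_0)^*+(z-\overline{z_0})\Gamma^+\big(I+(z-z_0)(A-z)^{-1}\big)\Gamma$ with $Q(z_0)$ boundedly invertible, let $\widehat Q(z):=-Q(z)^{-1}$, $\Gamma_z:=\big(I+(z-z_0)(A-z)^{-1}\big)\Gamma$, $\widehat\Gamma:=\Gamma\widehat Q(z_0)=-\Gamma Q(z_0)^{-1}$, and let $\widehat A$ be the relation with $$(\widehat A-z)^{-1}=(A-z)^{-1}+\Gamma_z\widehat Q(z)\Gamma_{\overline z}^+ ,$$ so that $\widehat Q(z)=\widehat Q(z_0)^*+(z-\overline{z_0})\widehat\Gamma^+\big(I+(z-z_0)(\widehat A-z)^{-1}\big)\widehat\Gamma$. Define $\widehat\Gamma_z:=\big(I+(z-z_0)(\widehat A-z)^{-1}\big)\widehat\Gamma$. Then, for all $z\in\varrho(A)\cap\varrho(\widehat A)$ at which $Q(z)$ is boundedly invertible, $$\widehat\Gamma_z=\Gamma_z\widehat Q(z)\qquad\text{and}\qquad (A-z)^{-1}=(\widehat A-z)^{-1}+\widehat\Gamma_zQ(z)\widehat\Gamma_{\overline z}^+ .$$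
   Context: $\mathcal H$ is a Hilbert space. $Q\in\mathcal N_\kappa(\mathcal H)$: an $\mathcal L(\mathcal H)$-valued function meromorphic in $\mathbb C\setminus\mathbb R$, $Q(\overline z)^*=Q(z)$, whose kernel $\frac{Q(z)-Q(w)^*}{z-\overline w}$ on $\mathcal D(Q)\cap\mathbb C^+$ has exactly $\kappa$ negative squares. The realization consists of a Pontryagin space $(\mathcal K,[\cdot,\cdot])$, a self-adjoint linear relation $A$ in $\mathcal K$, a point $z_0\in\varrho(A)\cap\mathbb C^+$ and a bounded $\Gamma:\mathcal H\to\mathcal K$; $\Gamma^+$ denotes the adjoint with respect to the Pontryagin inner product. *)

theory Defs
  imports "HOL-Analysis.Analysis"
begin

class complex_vector = real_vector +
  fixes scaleC :: "complex \<Rightarrow> 'a \<Rightarrow> 'a"  (infixr \<open>*\<^sub>C\<close> 75)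
  assumes scaleC_add_right: "a *\<^sub>C (x + y) = a *\<^sub>C x + a *\<^sub>C y"
    and scaleC_add_left: "(a + b) *\<^sub>C x = a *\<^sub>C x + b *\<^sub>C x"
    and scaleC_scaleC: "a *\<^sub>C (b *\<^sub>C x) = (a * b) *\<^sub>C x"
    and scaleC_one: "1 *\<^sub>C x = x"
    and scaleR_scaleC: "scaleR r x = complex_of_real r *\<^sub>C x"

class complex_normed_vector = complex_vector + real_normed_vector +
  assumes norm_scaleC: "norm (a *\<^sub>C x) = cmod a * norm x"

text \<open>Inner product linear in the first and antilinear in the second argument.\<close>
class complex_inner = complex_normed_vector +
  fixes cinner :: "'a \<Rightarrow> 'a \<Rightarrow> complex"
  assumes cinner_commute: "cinner x y = cnj (cinner y x)"
    and cinner_add_left: "cinner (x + y) z = cinner x z + cinner y z"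
    and cinner_scaleC_left: "cinner (a *\<^sub>C x) y = a * cinner x y"
    and cinner_nonneg: "0 \<le> Re (cinner x x)"
    and cinner_eq_zero_iff: "cinner x x = 0 \<longleftrightarrow> x = 0"
    and norm_eq_sqrt_cinner: "norm x = sqrt (Re (cinner x x))"

class chilbert_space = complex_inner + complete_space

definition clinear :: "('a::complex_vector \<Rightarrow> 'b::complex_vector) \<Rightarrow> bool" where
  "clinear T \<longleftrightarrow> (\<forall>x y. T (x + y) = T x + T y) \<and> (\<forall>a x. T (a *\<^sub>C x) = a *\<^sub>C T x)"

definition cbounded_linear :: "('a::complex_normed_vector \<Rightarrow> 'b::complex_normed_vector) \<Rightarrow> bool" where
  "cbounded_linear T \<longleftrightarrow> clinear T \<and> (\<exists>B. \<forall>x. norm (T x) \<le> B * norm x)"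

definition cadj :: "('a::complex_inner \<Rightarrow> 'b::complex_inner) \<Rightarrow> 'b \<Rightarrow> 'a" where
  "cadj T = (THE S. \<forall>x y. cinner (T x) y = cinner x (S y))"

definition binvertible :: "('a::complex_normed_vector \<Rightarrow> 'a) \<Rightarrow> bool" where
  "binvertible T \<longleftrightarrow> cbounded_linear T \<and>
     (\<exists>S. cbounded_linear S \<and> S \<circ> T = id \<and> T \<circ> S = id)"

definition binv :: "('a::complex_normed_vector \<Rightarrow> 'a) \<Rightarrow> 'a \<Rightarrow> 'a" where
  "binv T = (THE S. S \<circ> T = id \<and> T \<circ> S = id)"

text \<open>A Pontryagin space is represented as a Hilbert space together with a fundamental
  symmetry J whose negative eigenspace is finite-dimensional; the indefinite inner
  product is [x,y] = <J x, y>.\<close>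
definition fundamental_symmetry :: "('k::chilbert_space \<Rightarrow> 'k) \<Rightarrow> bool" where
  "fundamental_symmetry J \<longleftrightarrow> cbounded_linear J \<and> (\<forall>x. J (J x) = x) \<and>
     (\<forall>x y. cinner (J x) y = cinner x (J y)) \<and>
     (\<exists>B. finite B \<and> {x. J x = - x} \<subseteq> span B)"

definition pinner :: "('k::chilbert_space \<Rightarrow> 'k) \<Rightarrow> 'k \<Rightarrow> 'k \<Rightarrow> complex" where
  "pinner J x y = cinner (J x) y"

text \<open>Adjoint of an operator from a Hilbert space into the Pontryagin space with respect to
  the Pontryagin inner product: [T h, k] = <h, T^+ k>.\<close>
definition padj :: "('k::chilbert_space \<Rightarrow> 'k) \<Rightarrow> ('h::chilbert_space \<Rightarrow> 'k) \<Rightarrow> 'k \<Rightarrow> 'h" where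
  "padj J T = (THE S. \<forall>h k. pinner J (T h) k = cinner h (S k))"

definition rel_padj :: "('k::chilbert_space \<Rightarrow> 'k) \<Rightarrow> ('k \<times> 'k) set \<Rightarrow> ('k \<times> 'k) set" where
  "rel_padj J A = {(f, g). \<forall>(u, v)\<in>A. pinner J g u = pinner J f v}"

definition selfadjoint_rel :: "('k::chilbert_space \<Rightarrow> 'k) \<Rightarrow> ('k \<times> 'k) set \<Rightarrow> bool" where
  "selfadjoint_rel J A \<longleftrightarrow> A = rel_padj J A"

definition graph :: "('a \<Rightarrow> 'b) \<Rightarrow> ('a \<times> 'b) set" where
  "graph T = {(x, T x) | x. True}"

text \<open>The relation (A - z)^{-1}.\<close>
definition rel_res :: "('k::complex_vector \<times> 'k) set \<Rightarrow> complex \<Rightarrow> ('k \<times> 'k) set" where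
  "rel_res A z = {(g - z *\<^sub>C f, f) | f g. (f, g) \<in> A}"

definition resolvent_set :: "('k::complex_normed_vector \<times> 'k) set \<Rightarrow> complex set" where
  "resolvent_set A = {z. \<exists>R. cbounded_linear R \<and> rel_res A z = graph R}"

definition resolvent :: "('k::complex_normed_vector \<times> 'k) set \<Rightarrow> complex \<Rightarrow> 'k \<Rightarrow> 'k" where
  "resolvent A z = (THE R. rel_res A z = graph R)"

text \<open>Domain of holomorphy D(Q) in the nonreal plane (weak holomorphy, which for
  L(H)-valued functions is equivalent to holomorphy in operator norm).\<close>
definition hol_dom :: "(complex \<Rightarrow> 'h::chilbert_space \<Rightarrow> 'h) \<Rightarrow> complex set" where
  "hol_dom Q = {z. Im z \<noteq> 0 \<and> (\<exists>e>0. (\<forall>w\<in>ball z e. cbounded_linear (Q w)) \<and>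
      (\<forall>h g. (\<lambda>w. cinner (Q w h) g) holomorphic_on ball z e))}"

text \<open>The Hermitian kernel K (on the set S) has at least m negative squares: some Gram-type
  matrix built from finitely many points of S has an m-dimensional negative definite subspace.\<close>
definition neg_squares_ge ::
    "(complex \<Rightarrow> complex \<Rightarrow> 'h::chilbert_space \<Rightarrow> 'h) \<Rightarrow> complex set \<Rightarrow> nat \<Rightarrow> bool" where
  "neg_squares_ge K S m \<longleftrightarrow> (\<exists>(n::nat) (z::nat \<Rightarrow> complex) (h::nat \<Rightarrow> nat \<Rightarrow> 'h).
     (\<forall>i<n. z i \<in> S) \<and>
     (\<forall>a::nat \<Rightarrow> complex. (\<exists>p<m. a p \<noteq> 0) \<longrightarrow>
        Re (\<Sum>p<m. \<Sum>q<m. cnj (a p) * a q *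
              (\<Sum>i<n. \<Sum>j<n. cinner (K (z i) (z j) (h q j)) (h p i))) < 0))"

definition nevanlinna_kernel :: "(complex \<Rightarrow> 'h::chilbert_space \<Rightarrow> 'h) \<Rightarrow> complex \<Rightarrow> complex \<Rightarrow> 'h \<Rightarrow> 'h" where
  "nevanlinna_kernel Q z w = (\<lambda>h. (1 / (z - cnj w)) *\<^sub>C (Q z h - cadj (Q w) h))"

definition gen_nevanlinna :: "nat \<Rightarrow> (complex \<Rightarrow> 'h::chilbert_space \<Rightarrow> 'h) \<Rightarrow> bool" where
  "gen_nevanlinna \<kappa> Q \<longleftrightarrow>
     (\<forall>w. Im w \<noteq> 0 \<and> w \<notin> hol_dom Q \<longrightarrow>
        (\<exists>e>0. ball w e - {w} \<subseteq> hol_dom Q) \<and>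
        (\<exists>n::nat. \<forall>h g. \<exists>l. ((\<lambda>z. (z - w) ^ n * cinner (Q z h) g) \<longlongrightarrow> l) (at w))) \<and>
     (\<forall>z\<in>hol_dom Q. cnj z \<in> hol_dom Q \<and> cadj (Q (cnj z)) = Q z) \<and>
     neg_squares_ge (nevanlinna_kernel Q) (hol_dom Q \<inter> {z. Im z > 0}) \<kappa> \<and>
     \<not> neg_squares_ge (nevanlinna_kernel Q) (hol_dom Q \<inter> {z. Im z > 0}) (Suc \<kappa>)"

end

theory Submission
  imports Defs
begin

text \<open>
  Everything follows algebraically from the realization. Its two key consequences are
  Q z - Q z0 = (z - z0) Gz (cnj z)^+ \<Gamma> and (Q z)^* = Q (cnj z); both rest on the symmetry
  [(A - z)^-1 u, v] = [u, (A - cnj z)^-1 v] of the resolvents of a selfadjoint relation.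
  Substituting the given formula for (Ahat - z)^-1 into the definition of Gzhat z, the first
  consequence collapses Gzhat z to Gz z \<circ> Qhat z. Taking adjoints gives
  Gzhat (cnj z)^+ = Qhat z \<circ> Gz (cnj z)^+, so the correction term
  Gzhat z Q z Gzhat (cnj z)^+ = - Gz z Qhat z Gz (cnj z)^+ cancels the one in (Ahat - z)^-1.
  The adjoints themselves come from the Riesz representation theorem, proved by minimizing
  the norm on a closed affine hyperplane.
\<close>

section \<open>Complex inner product spaces\<close>

lemma scaleC_zero_left [simp]: "(0::complex) *\<^sub>C (x::'a::complex_vector) = 0"
  by (metis of_real_0 scaleR_scaleC scaleR_zero_left)

lemma scaleC_minus1: "(-1) *\<^sub>C (x::'a::complex_vector) = - x"
  by (metis of_real_1 of_real_minus scaleR_minus1_left scaleR_scaleC)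

lemma scaleC_minus_right: "a *\<^sub>C (- x::'a::complex_vector) = - (a *\<^sub>C x)"
  by (metis mult.commute scaleC_minus1 scaleC_scaleC)

lemma cinner_add_right: "cinner x (y + z) = cinner x y + cinner (x::'a::complex_inner) z"
  by (metis cinner_add_left cinner_commute complex_cnj_add)

lemma cinner_scaleC_right: "cinner x (a *\<^sub>C y) = cnj a * cinner (x::'a::complex_inner) y"
  by (metis cinner_commute cinner_scaleC_left complex_cnj_mult)

lemma cinner_zero_left [simp]: "cinner 0 (x::'a::complex_inner) = 0"
  by (metis cinner_scaleC_left mult_zero_left scaleC_zero_left)

lemma cinner_zero_right [simp]: "cinner (x::'a::complex_inner) 0 = 0"
  by (metis cinner_commute cinner_zero_left complex_cnj_zero)

lemma cinner_minus_left: "cinner (- x) (y::'a::complex_inner) = - cinner x y"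
  by (metis cinner_scaleC_left mult_minus1 scaleC_minus1)

lemma cinner_minus_right: "cinner x (- y::'a::complex_inner) = - cinner x y"
  by (metis cinner_commute cinner_minus_left complex_cnj_minus)

lemma cinner_diff_left: "cinner (x - y) (z::'a::complex_inner) = cinner x z - cinner y z"
  by (simp only: cinner_add_left cinner_minus_left diff_conv_add_uminus)

lemma cinner_diff_right: "cinner x (y - z::'a::complex_inner) = cinner x y - cinner x z"
  by (simp only: cinner_add_right cinner_minus_right diff_conv_add_uminus)

lemma cinner_right_eqI: "(\<And>h. cinner h s = cinner h t) \<Longrightarrow> s = (t::'a::complex_inner)"
  by (metis cinner_diff_right cinner_eq_zero_iff diff_eq_eq diff_self)

lemma cinner_self_norm_power2: "cinner x x = complex_of_real ((norm (x::'a::complex_inner))\<^sup>2)"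
proof -
  have "Im (cinner x x) = 0"
    using cinner_commute[of x x] by (metis cnj.sel(2) equal_neg_zero)
  moreover have "Re (cinner x x) = (norm x)\<^sup>2"
    using cinner_nonneg[of x] by (simp add: norm_eq_sqrt_cinner)
  ultimately show ?thesis by (simp add: complex_eq_iff)
qed

lemma cmod_cinner_le: "cmod (cinner x y) \<le> norm x * norm (y::'a::complex_inner)"
proof (cases "y = 0")
  case True then show ?thesis by simp
next
  case False
  define a where "a = cinner y y"
  define c where "c = cinner x y"
  have a: "a = complex_of_real ((norm y)\<^sup>2)" unfolding a_def by (rule cinner_self_norm_power2)
  have yx: "cinner y x = cnj c" unfolding c_def by (rule cinner_commute)
  have cc: "c * cnj c = complex_of_real ((cmod c)\<^sup>2)" by (rule complex_norm_square[symmetric])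
  define v where "v = a *\<^sub>C x - c *\<^sub>C y"
  have "cinner v v = cnj a * (a * cinner x x - c * cinner y x) - cnj c * (a * cinner x y - c * cinner y y)"
    unfolding v_def
    by (simp only: cinner_diff_left cinner_diff_right cinner_scaleC_left cinner_scaleC_right)
  also have "\<dots> = a * (a * cinner x x - c * cnj c)"
    using a yx by (simp add: algebra_simps c_def[symmetric] a_def[symmetric])
  also have "\<dots> = complex_of_real ((norm y)\<^sup>2 * ((norm y)\<^sup>2 * (norm x)\<^sup>2 - (cmod c)\<^sup>2))"
    using a cc by (simp add: cinner_self_norm_power2)
  finally have "0 \<le> (norm y)\<^sup>2 * ((norm y)\<^sup>2 * (norm x)\<^sup>2 - (cmod c)\<^sup>2)"
    using cinner_nonneg[of v] by simp
  with False have "(cmod c)\<^sup>2 \<le> (norm x * norm y)\<^sup>2"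
    by (simp add: zero_le_mult_iff power_mult_distrib mult.commute)
  then show ?thesis unfolding c_def
    by (meson mult_nonneg_nonneg norm_ge_zero power2_le_imp_le)
qed

lemma parallelogram_law:
  "(norm (x + y))\<^sup>2 + (norm (x - y))\<^sup>2 = 2 * (norm x)\<^sup>2 + 2 * (norm (y::'a::complex_inner))\<^sup>2"
proof -
  have "complex_of_real ((norm (x + y))\<^sup>2 + (norm (x - y))\<^sup>2) = cinner (x + y) (x + y) + cinner (x - y) (x - y)"
    by (simp only: cinner_self_norm_power2 of_real_add)
  also have "\<dots> = 2 * cinner x x + 2 * cinner y y"
    by (simp add: cinner_add_left cinner_add_right cinner_diff_left cinner_diff_right)
  also have "\<dots> = complex_of_real (2 * (norm x)\<^sup>2 + 2 * (norm y)\<^sup>2)"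
    by (simp add: cinner_self_norm_power2)
  finally show ?thesis by (simp only: of_real_eq_iff)
qed

section \<open>The Riesz representation theorem\<close>

lemma minimizing_sequence_Cauchy:
  fixes M :: "'a::complex_inner set" and X :: "nat \<Rightarrow> 'a"
  assumes mid: "\<And>x y. x \<in> M \<Longrightarrow> y \<in> M \<Longrightarrow> scaleR (1/2) (x + y) \<in> M"
    and lower: "\<And>x. x \<in> M \<Longrightarrow> d \<le> (norm x)\<^sup>2"
    and X: "\<And>n. X n \<in> M" "\<And>n. (norm (X n))\<^sup>2 < d + inverse (real (Suc n))"
  shows "Cauchy X"
proof (rule metric_CauchyI)
  have bound: "(norm (X m - X n))\<^sup>2 \<le> 2 * inverse (real (Suc m)) + 2 * inverse (real (Suc n))" for m n
  proof -
    have "d \<le> (norm (scaleR (1/2) (X m + X n)))\<^sup>2" using lower mid X(1) by blast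
    then have "4 * d \<le> (norm (X m + X n))\<^sup>2" by (simp add: power_divide)
    then show ?thesis using parallelogram_law[of "X m" "X n"] X(2)[of m] X(2)[of n] by linarith
  qed
  fix e :: real assume e: "0 < e"
  obtain N where N: "inverse (real (Suc N)) < e\<^sup>2 / 4"
    using reals_Archimedean[of "e\<^sup>2 / 4"] e by auto
  have "dist (X m) (X n) < e" if "N \<le> m" "N \<le> n" for m n
  proof -
    have "inverse (real (Suc m)) \<le> inverse (real (Suc N))" "inverse (real (Suc n)) \<le> inverse (real (Suc N))"
      using that by (simp_all add: le_imp_inverse_le)
    then have "(norm (X m - X n))\<^sup>2 < e\<^sup>2" using bound[of m n] N by linarith
    then show ?thesis using e by (simp add: dist_norm power_less_imp_less_base less_le)
  qed
  then show "\<exists>N. \<forall>m\<ge>N. \<forall>n\<ge>N. dist (X m) (X n) < e" by blast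
qed

lemma closed_midpoint_convex_has_min_norm:
  fixes M :: "'a::chilbert_space set"
  assumes "closed M" "M \<noteq> {}"
    and mid: "\<And>x y. x \<in> M \<Longrightarrow> y \<in> M \<Longrightarrow> scaleR (1/2) (x + y) \<in> M"
  shows "\<exists>y\<in>M. \<forall>x\<in>M. norm y \<le> norm x"
proof -
  define d where "d = Inf ((\<lambda>x. (norm x)\<^sup>2) ` M)"
  have bdd: "bdd_below ((\<lambda>x. (norm x)\<^sup>2) ` M)" by (rule bdd_belowI[of _ 0]) auto
  have lower: "d \<le> (norm x)\<^sup>2" if "x \<in> M" for x
    unfolding d_def using bdd that by (simp add: cInf_lower)
  have "\<exists>x\<in>M. (norm x)\<^sup>2 < d + inverse (real (Suc n))" for n
  proof -
    have "d < d + inverse (real (Suc n))" by simp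
    then show ?thesis using cInf_less_iff[OF _ bdd] \<open>M \<noteq> {}\<close> unfolding d_def by blast
  qed
  then obtain X where X: "\<And>n. X n \<in> M" "\<And>n. (norm (X n))\<^sup>2 < d + inverse (real (Suc n))"
    by metis
  have "Cauchy X" using minimizing_sequence_Cauchy[of M d X] mid lower X by blast
  then obtain y where y: "X \<longlonglongrightarrow> y" using Cauchy_convergent_iff convergent_def by blast
  have "y \<in> M" using \<open>closed M\<close> X(1) y closed_sequential_limits by blast
  have "(\<lambda>n. (norm (X n))\<^sup>2) \<longlonglongrightarrow> (norm y)\<^sup>2" by (intro tendsto_intros y)
  then have "(norm y)\<^sup>2 \<le> d"
    using LIMSEQ_le[OF _ LIMSEQ_inverse_real_of_nat_add[of d]] X(2) less_imp_le by blast
  then have "norm y \<le> norm x" if "x \<in> M" for x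
    by (meson lower[OF that] order_trans power2_le_imp_le norm_ge_zero)
  with \<open>y \<in> M\<close> show ?thesis by blast
qed

lemma min_norm_orthogonal:
  fixes y n :: "'a::complex_inner"
  assumes min: "\<And>t. norm y \<le> norm (y + t *\<^sub>C n)"
  shows "cinner n y = 0"
proof -
  define c where "c = cinner y n"
  define r where "r = inverse ((norm n)\<^sup>2 + 1)"
  have "0 < (norm n)\<^sup>2 + 1" by (simp add: add_nonneg_pos)
  then have r: "0 < r" "r * (norm n)\<^sup>2 < 1"
    unfolding r_def by (simp_all add: field_simps)
  define t where "t = - (complex_of_real r * c)"
  have nc: "cinner n y = cnj c" unfolding c_def by (rule cinner_commute)
  have cc: "c * cnj c = complex_of_real ((cmod c)\<^sup>2)" by (rule complex_norm_square[symmetric])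
  \<comment> \<open>since r |n|^2 < 1, the linear term in t outweighs the quadratic one\<close>
  have "complex_of_real ((norm (y + t *\<^sub>C n))\<^sup>2) = cinner (y + t *\<^sub>C n) (y + t *\<^sub>C n)"
    by (simp only: cinner_self_norm_power2)
  also have "\<dots> = cinner y y + cnj t * c + t * cnj c + t * cnj t * cinner n n"
    by (simp add: cinner_add_left cinner_add_right cinner_scaleC_left cinner_scaleC_right
        algebra_simps nc c_def)
  also have "\<dots> = cinner y y - 2 * complex_of_real r * (c * cnj c)
      + (complex_of_real r)\<^sup>2 * (c * cnj c) * cinner n n"
    unfolding t_def by (simp add: algebra_simps power2_eq_square)
  also have "\<dots> = complex_of_real ((norm y)\<^sup>2 - 2 * r * (cmod c)\<^sup>2 + r\<^sup>2 * (cmod c)\<^sup>2 * (norm n)\<^sup>2)"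
    by (simp only: cc cinner_self_norm_power2) simp
  finally have "(norm (y + t *\<^sub>C n))\<^sup>2 = (norm y)\<^sup>2 - 2 * r * (cmod c)\<^sup>2 + r\<^sup>2 * (cmod c)\<^sup>2 * (norm n)\<^sup>2"
    by (simp only: of_real_eq_iff)
  moreover have "(norm y)\<^sup>2 \<le> (norm (y + t *\<^sub>C n))\<^sup>2" using min[of t] by (simp add: power_mono)
  ultimately have "0 \<le> r * (cmod c)\<^sup>2 * (r * (norm n)\<^sup>2 - 2)"
    by (simp add: algebra_simps power2_eq_square)
  with r have "r * (cmod c)\<^sup>2 \<le> 0"
    by (smt (verit) zero_le_mult_iff)
  with r have "(cmod c)\<^sup>2 \<le> 0" by (simp add: mult_le_0_iff)
  then show ?thesis using nc by simp
qed

lemma riesz_representation: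
  fixes f :: "'a::chilbert_space \<Rightarrow> complex"
  assumes add: "\<And>x y. f (x + y) = f x + f y"
    and scale: "\<And>a x. f (a *\<^sub>C x) = a * f x"
    and bound: "\<And>x. cmod (f x) \<le> B * norm x"
  shows "\<exists>y. \<forall>x. f x = cinner x y"
proof (cases "\<forall>x. f x = 0")
  case True
  then show ?thesis by (intro exI[of _ 0]) simp
next
  case False
  then obtain x0 where x0: "f x0 \<noteq> 0" by blast
  have scaleR: "f (scaleR r x) = scaleR r (f x)" for r x
    by (simp add: scaleR_scaleC scale scaleR_conv_of_real)
  have "bounded_linear f"
    by (rule bounded_linear_intro[of f B]) (use add scaleR bound in \<open>auto simp: mult.commute\<close>)
  define M where "M = {x. f x = 1}"
  have "f (inverse (f x0) *\<^sub>C x0) = 1" using x0 by (simp add: scale)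
  then have "M \<noteq> {}" unfolding M_def by blast
  moreover have "closed M" unfolding M_def
    by (rule closed_Collect_eq) (use linear_continuous_on[OF \<open>bounded_linear f\<close>] in auto)
  moreover have "scaleR (1/2) (x + y) \<in> M" if "x \<in> M" "y \<in> M" for x y
    using that by (simp add: M_def scaleR add scaleR_conv_of_real)
  ultimately obtain y0 where "y0 \<in> M" and "\<forall>x\<in>M. norm y0 \<le> norm x"
    using closed_midpoint_convex_has_min_norm by blast
  then have y0: "f y0 = 1" and min: "\<And>x. f x = 1 \<Longrightarrow> norm y0 \<le> norm x"
    unfolding M_def by auto
  have orth: "cinner n y0 = 0" if "f n = 0" for n
    by (rule min_norm_orthogonal, rule min) (simp add: add scale y0 that)
  have represent: "cinner x y0 = f x * complex_of_real ((norm y0)\<^sup>2)" for x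
  proof -
    have "f (x - f x *\<^sub>C y0) = 0"
      using add[of "x - f x *\<^sub>C y0" "f x *\<^sub>C y0"] by (simp add: scale y0)
    then have "cinner (x - f x *\<^sub>C y0) y0 = 0" by (rule orth)
    then show ?thesis by (simp add: cinner_diff_left cinner_scaleC_left cinner_self_norm_power2)
  qed
  have "y0 \<noteq> 0" using y0 scale[of 0 0] by auto
  then show ?thesis
    by (intro exI[of _ "complex_of_real (inverse ((norm y0)\<^sup>2)) *\<^sub>C y0"])
      (simp add: cinner_scaleC_right represent)
qed

section \<open>Bounded operators and their adjoints\<close>

lemma cbounded_linear_add: "cbounded_linear T \<Longrightarrow> T (x + y) = T x + T y"
  unfolding cbounded_linear_def clinear_def by blast

lemma cbounded_linear_scaleC: "cbounded_linear T \<Longrightarrow> T (a *\<^sub>C x) = a *\<^sub>C T x"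
  unfolding cbounded_linear_def clinear_def by blast

lemma cbounded_linear_minus: "cbounded_linear T \<Longrightarrow> T (- x) = - T x"
  using cbounded_linear_scaleC[of T "-1" x] by (simp add: scaleC_minus1)

lemma cbounded_linear_diff: "cbounded_linear T \<Longrightarrow> T (x - y) = T x - T y"
  by (simp only: diff_conv_add_uminus cbounded_linear_add cbounded_linear_minus)

lemma cbounded_linear_bound_nonneg:
  assumes "cbounded_linear T"
  shows "\<exists>B\<ge>0. \<forall>x. norm (T x) \<le> B * norm x"
proof -
  obtain B where B: "\<And>x. norm (T x) \<le> B * norm x"
    using assms unfolding cbounded_linear_def by blast
  have "norm (T x) \<le> max B 0 * norm x" for x
    using B[of x] mult_right_mono[of B "max B 0" "norm x"] by simp
  then show ?thesis by (intro exI[of _ "max B 0"]) simp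
qed

lemma cbounded_linear_compose:
  assumes S: "cbounded_linear S" and T: "cbounded_linear T"
  shows "cbounded_linear (\<lambda>x. S (T x))"
proof -
  obtain B1 where B1: "B1 \<ge> 0" "\<And>x. norm (S x) \<le> B1 * norm x"
    using cbounded_linear_bound_nonneg[OF S] by blast
  obtain B2 where B2: "\<And>x. norm (T x) \<le> B2 * norm x"
    using cbounded_linear_bound_nonneg[OF T] by blast
  have "norm (S (T x)) \<le> B1 * (B2 * norm x)" for x
    using B1(2)[of "T x"] mult_left_mono[OF B2[of x] B1(1)] by linarith
  then have "norm (S (T x)) \<le> (B1 * B2) * norm x" for x by (simp add: mult.assoc)
  then show ?thesis using assms unfolding cbounded_linear_def clinear_def by auto
qed

lemma cbounded_linear_adjoint:
  assumes T: "cbounded_linear T" and adj: "\<And>x y. cinner (T x) y = cinner x (S y)"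
  shows "cbounded_linear S"
proof -
  have "S (y1 + y2) = S y1 + S y2" for y1 y2
    by (rule cinner_right_eqI) (simp add: adj[symmetric] cinner_add_right)
  moreover have "S (a *\<^sub>C y) = a *\<^sub>C S y" for a y
    by (rule cinner_right_eqI) (simp add: adj[symmetric] cinner_scaleC_right)
  moreover obtain B where B: "B \<ge> 0" "\<And>x. norm (T x) \<le> B * norm x"
    using cbounded_linear_bound_nonneg[OF T] by blast
  have "norm (S y) \<le> B * norm y" for y
  proof -
    have "(norm (S y))\<^sup>2 = cmod (cinner (T (S y)) y)"
      by (simp add: adj cinner_self_norm_power2 norm_power)
    also have "\<dots> \<le> norm (T (S y)) * norm y" by (rule cmod_cinner_le)
    also have "\<dots> \<le> (B * norm (S y)) * norm y" by (rule mult_right_mono[OF B(2) norm_ge_zero])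
    finally have "norm (S y) * norm (S y) \<le> norm (S y) * (B * norm y)"
      by (simp add: power2_eq_square algebra_simps)
    then show ?thesis using B(1) by (cases "norm (S y) = 0") auto
  qed
  ultimately show ?thesis unfolding cbounded_linear_def clinear_def by blast
qed

lemma adjoint_exists:
  fixes T :: "'a::chilbert_space \<Rightarrow> 'b::complex_inner"
  assumes T: "cbounded_linear T"
  shows "\<exists>S. \<forall>x y. cinner (T x) y = cinner x (S y)"
proof -
  obtain B where B: "B \<ge> 0" "\<And>x. norm (T x) \<le> B * norm x"
    using cbounded_linear_bound_nonneg[OF T] by blast
  have "\<exists>s. \<forall>x. cinner (T x) y = cinner x s" for y
  proof (rule riesz_representation[where B = "B * norm y"])
    show "cinner (T (x1 + x2)) y = cinner (T x1) y + cinner (T x2) y" for x1 x2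
      by (simp add: cbounded_linear_add[OF T] cinner_add_left)
    show "cinner (T (a *\<^sub>C x)) y = a * cinner (T x) y" for a x
      by (simp add: cbounded_linear_scaleC[OF T] cinner_scaleC_left)
    show "cmod (cinner (T x) y) \<le> B * norm y * norm x" for x
      using cmod_cinner_le[of "T x" y] mult_right_mono[OF B(2)[of x] norm_ge_zero[of y]]
      by (simp add: algebra_simps)
  qed
  then show ?thesis by metis
qed

lemma cadj_cinner:
  fixes T :: "'a::chilbert_space \<Rightarrow> 'b::complex_inner"
  assumes T: "cbounded_linear T"
  shows "cinner (T x) y = cinner x (cadj T y)"
proof -
  obtain S where S: "\<forall>x y. cinner (T x) y = cinner x (S y)"
    using adjoint_exists[OF T] by blast
  have "cadj T = S" unfolding cadj_def
  proof (rule the_equality)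
    fix S' assume "\<forall>x y. cinner (T x) y = cinner x (S' y)"
    then show "S' = S" using S by (metis cinner_right_eqI ext)
  qed (rule S)
  then show ?thesis using S by simp
qed

lemma cbounded_linear_cadj:
  fixes T :: "'a::chilbert_space \<Rightarrow> 'b::complex_inner"
  assumes T: "cbounded_linear T"
  shows "cbounded_linear (cadj T)"
  by (rule cbounded_linear_adjoint[OF T cadj_cinner[OF T]])

lemma binvertibleD:
  assumes "binvertible T"
  shows "cbounded_linear T" "cbounded_linear (binv T)" "binv T (T x) = x" "T (binv T x) = x"
proof -
  obtain S where S: "cbounded_linear S" "S \<circ> T = id" "T \<circ> S = id"
    using assms unfolding binvertible_def by blast
  have "binv T = S" unfolding binv_def
  proof (rule the_equality)
    fix S' assume "S' \<circ> T = id \<and> T \<circ> S' = id"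
    then show "S' = S" using S by (metis comp_assoc comp_id id_comp)
  qed (use S in simp)
  then show "cbounded_linear (binv T)" "binv T (T x) = x" "T (binv T x) = x"
    using S by (simp_all add: pointfree_idE)
  show "cbounded_linear T" using assms unfolding binvertible_def by blast
qed

lemma binvertibleI:
  assumes "cbounded_linear T" "cbounded_linear S" "\<And>x. S (T x) = x" "\<And>x. T (S x) = x"
  shows "binvertible T"
  unfolding binvertible_def using assms by (auto intro!: exI[of _ S] simp: fun_eq_iff)

lemma binvertible_adjoint:
  fixes T S :: "'a::chilbert_space \<Rightarrow> 'a"
  assumes T: "binvertible T" and adj: "\<And>x y. cinner (T x) y = cinner x (S y)"
  shows "binvertible S" "cinner (binv T x) y = cinner x (binv S y)"
proof -
  note inv = binvertibleD[OF T]
  have S: "cbounded_linear S" by (rule cbounded_linear_adjoint[OF inv(1) adj])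
  show "binvertible S"
  proof (rule binvertibleI[OF S cbounded_linear_cadj[OF inv(2)]])
    show "cadj (binv T) (S y) = y" for y
    proof (rule cinner_right_eqI)
      fix x
      have "cinner x (cadj (binv T) (S y)) = cinner (binv T x) (S y)"
        by (rule cadj_cinner[OF inv(2), symmetric])
      then show "cinner x (cadj (binv T) (S y)) = cinner x y" by (simp add: adj[symmetric] inv(4))
    qed
    show "S (cadj (binv T) y) = y" for y
    proof (rule cinner_right_eqI)
      fix x
      have "cinner x (S (cadj (binv T) y)) = cinner (binv T (T x)) y"
        by (simp add: adj[symmetric] cadj_cinner[OF inv(2)])
      then show "cinner x (S (cadj (binv T) y)) = cinner x y" by (simp add: inv(3))
    qed
  qed
  then have "cinner (binv T x) y = cinner (binv T x) (S (binv S y))" by (simp add: binvertibleD(4))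
  then show "cinner (binv T x) y = cinner x (binv S y)" by (simp add: adj[symmetric] inv(4))
qed

section \<open>The Pontryagin inner product\<close>

lemma pinner_add_right: "pinner J x (y + z) = pinner J x y + pinner J x z"
  unfolding pinner_def by (simp add: cinner_add_right)

lemma pinner_scaleC_right: "pinner J x (a *\<^sub>C y) = cnj a * pinner J x y"
  unfolding pinner_def by (simp add: cinner_scaleC_right)

lemma pinner_diff_right: "pinner J x (y - z) = pinner J x y - pinner J x z"
  unfolding pinner_def by (simp add: cinner_diff_right)

lemma padj_eqI:
  fixes T :: "'h::chilbert_space \<Rightarrow> 'k::chilbert_space"
  assumes "\<And>h k. pinner J (T h) k = cinner h (S k)"
  shows "padj J T = S"
  unfolding padj_def
proof (rule the_equality)
  fix S' assume "\<forall>h k. pinner J (T h) k = cinner h (S' k)"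
  then show "S' = S" using assms by (metis cinner_right_eqI ext)
qed (use assms in blast)

context
  fixes J :: "'k::chilbert_space \<Rightarrow> 'k"
  assumes J: "fundamental_symmetry J"
begin

lemma fundamental_symmetry_cbounded_linear: "cbounded_linear J"
  and fundamental_symmetry_involution: "J (J x) = x"
  and fundamental_symmetry_cinner: "cinner (J x) y = cinner x (J y)"
  using J unfolding fundamental_symmetry_def by blast+

lemma pinner_add_left: "pinner J (x + y) z = pinner J x z + pinner J y z"
  unfolding pinner_def
  by (simp add: cbounded_linear_add[OF fundamental_symmetry_cbounded_linear] cinner_add_left)

lemma pinner_scaleC_left: "pinner J (a *\<^sub>C x) y = a * pinner J x y"
  unfolding pinner_def
  by (simp add: cbounded_linear_scaleC[OF fundamental_symmetry_cbounded_linear] cinner_scaleC_left)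

lemma pinner_diff_left: "pinner J (x - y) z = pinner J x z - pinner J y z"
  unfolding pinner_def
  by (simp add: cbounded_linear_diff[OF fundamental_symmetry_cbounded_linear] cinner_diff_left)

lemma pinner_commute: "pinner J x y = cnj (pinner J y x)"
  unfolding pinner_def by (metis cinner_commute fundamental_symmetry_cinner)

lemma pinner_right_eqI: "(\<And>u. pinner J u a = pinner J u b) \<Longrightarrow> a = b"
  unfolding pinner_def by (rule cinner_right_eqI) (metis fundamental_symmetry_involution)

lemma pinner_padj:
  fixes T :: "'h::chilbert_space \<Rightarrow> 'k"
  assumes T: "cbounded_linear T"
  shows "pinner J (T h) k = cinner h (padj J T k)"
proof -
  have "padj J T = (\<lambda>k. cadj T (J k))"
    by (rule padj_eqI) (simp add: pinner_def fundamental_symmetry_cinner cadj_cinner[OF T])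
  then show ?thesis by (simp add: pinner_def fundamental_symmetry_cinner cadj_cinner[OF T])
qed

lemma cinner_padj_left:
  fixes T :: "'h::chilbert_space \<Rightarrow> 'k"
  assumes T: "cbounded_linear T"
  shows "cinner (padj J T u) h = pinner J u (T h)"
  using pinner_padj[OF T, of h u] by (simp add: cinner_commute[of "padj J T u"] pinner_commute[of u])

lemma pinner_adjoint_exists:
  assumes R: "cbounded_linear R"
  shows "\<exists>S. cbounded_linear S \<and> (\<forall>u v. pinner J (R u) v = pinner J u (S v))"
proof (intro exI[of _ "\<lambda>v. J (cadj R (J v))"] conjI allI)
  show "cbounded_linear (\<lambda>v. J (cadj R (J v)))"
    using cbounded_linear_compose[OF fundamental_symmetry_cbounded_linear
        cbounded_linear_compose[OF cbounded_linear_cadj[OF R] fundamental_symmetry_cbounded_linear]] .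
  show "pinner J (R u) v = pinner J u (J (cadj R (J v)))" for u v
    unfolding pinner_def
    by (simp add: fundamental_symmetry_cinner fundamental_symmetry_involution cadj_cinner[OF R])
qed

end

section \<open>Resolvents of selfadjoint relations\<close>

lemma graph_inject: "graph R = graph R' \<Longrightarrow> R = R'"
proof
  fix x assume "graph R = graph R'"
  then have "(x, R x) \<in> graph R'" unfolding graph_def by blast
  then show "R x = R' x" unfolding graph_def by auto
qed

lemma resolvent_eqI: "rel_res A z = graph R \<Longrightarrow> resolvent A z = R"
  unfolding resolvent_def by (rule the_equality) (auto dest: graph_inject)

lemma resolvent_setD:
  assumes "z \<in> resolvent_set A"
  shows "cbounded_linear (resolvent A z)" "rel_res A z = graph (resolvent A z)"
proof -
  obtain R where "cbounded_linear R" "rel_res A z = graph R"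
    using assms unfolding resolvent_set_def by blast
  then show "cbounded_linear (resolvent A z)" "rel_res A z = graph (resolvent A z)"
    by (simp_all add: resolvent_eqI)
qed

lemma rel_res_graphD:
  assumes "rel_res A z = graph R" "(f, g) \<in> A"
  shows "R (g - z *\<^sub>C f) = f"
proof -
  have "(g - z *\<^sub>C f, f) \<in> graph R" using assms unfolding rel_res_def by blast
  then show ?thesis unfolding graph_def by auto
qed

lemma rel_res_graphE:
  assumes "rel_res A z = graph R"
  obtains f g where "(f, g) \<in> A" "u = g - z *\<^sub>C f" "R u = f"
proof -
  have "(u, R u) \<in> rel_res A z" using assms unfolding graph_def by blast
  then show ?thesis using that unfolding rel_res_def by blast
qed

context
  fixes J :: "'k::chilbert_space \<Rightarrow> 'k" and A :: "('k \<times> 'k) set"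
  assumes J: "fundamental_symmetry J" and A: "selfadjoint_rel J A"
begin

lemma selfadjoint_rel_pinner:
  assumes "(f, g) \<in> A" "(f', g') \<in> A"
  shows "pinner J f' g = pinner J g' f"
proof -
  have "(f, g) \<in> rel_padj J A" using A assms(1) unfolding selfadjoint_rel_def by simp
  then have "pinner J g f' = pinner J f g'" using assms(2) unfolding rel_padj_def by blast
  then show ?thesis by (metis J pinner_commute)
qed

context
  fixes z :: complex and R S :: "'k \<Rightarrow> 'k"
  assumes R: "rel_res A z = graph R"
    and S: "\<And>u v. pinner J (R u) v = pinner J u (S v)"
begin

lemma rel_res_cnj_subset_graph: "rel_res A (cnj z) \<subseteq> graph S"
proof
  fix x assume "x \<in> rel_res A (cnj z)"
  then obtain f g where x: "x = (g - cnj z *\<^sub>C f, f)" and fg: "(f, g) \<in> A"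
    unfolding rel_res_def by blast
  have "f = S (g - cnj z *\<^sub>C f)"
  proof (rule pinner_right_eqI[OF J])
    fix u
    obtain f' g' where fg': "(f', g') \<in> A" "u = g' - z *\<^sub>C f'" "R u = f'"
      using R by (rule rel_res_graphE)
    have "pinner J u (S (g - cnj z *\<^sub>C f)) = pinner J f' (g - cnj z *\<^sub>C f)"
      using S[of u] fg'(3) by simp
    also have "\<dots> = pinner J f' g - z * pinner J f' f"
      by (simp add: pinner_diff_right pinner_scaleC_right)
    also have "\<dots> = pinner J u f"
      using fg' selfadjoint_rel_pinner[OF fg fg'(1)]
      by (simp add: pinner_diff_left[OF J] pinner_scaleC_left[OF J])
    finally show "pinner J u f = pinner J u (S (g - cnj z *\<^sub>C f))" by simp
  qed
  then show "x \<in> graph S" unfolding x graph_def by auto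
qed

lemma graph_subset_rel_res_cnj: "graph S \<subseteq> rel_res A (cnj z)"
proof
  fix x assume "x \<in> graph S"
  then obtain v where x: "x = (v, S v)" unfolding graph_def by blast
  have "(S v, v + cnj z *\<^sub>C S v) \<in> rel_padj J A"
    unfolding rel_padj_def
  proof (clarsimp)
    fix u' v' assume uv: "(u', v') \<in> A"
    have Rw: "R (v' - z *\<^sub>C u') = u'" by (rule rel_res_graphD[OF R uv])
    have "pinner J (S v) v' = pinner J (S v) (v' - z *\<^sub>C u') + cnj z * pinner J (S v) u'"
      by (simp add: pinner_diff_right pinner_scaleC_right)
    also have "pinner J (S v) (v' - z *\<^sub>C u') = pinner J v u'"
      using S[of "v' - z *\<^sub>C u'" v] Rw by (metis J pinner_commute)
    finally show "pinner J (v + cnj z *\<^sub>C S v) u' = pinner J (S v) v'"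
      by (simp add: pinner_add_left[OF J] pinner_scaleC_left[OF J])
  qed
  then have "(S v, v + cnj z *\<^sub>C S v) \<in> A" using A unfolding selfadjoint_rel_def by simp
  then have "((v + cnj z *\<^sub>C S v) - cnj z *\<^sub>C S v, S v) \<in> rel_res A (cnj z)"
    unfolding rel_res_def by blast
  then show "x \<in> rel_res A (cnj z)" unfolding x by simp
qed

end

lemma selfadjoint_resolvent_cnj:
  assumes z: "z \<in> resolvent_set A"
  shows "cnj z \<in> resolvent_set A"
    and "pinner J (resolvent A z u) v = pinner J u (resolvent A (cnj z) v)"
proof -
  obtain S where S: "cbounded_linear S" "\<And>u v. pinner J (resolvent A z u) v = pinner J u (S v)"
    using pinner_adjoint_exists[OF J resolvent_setD(1)[OF z]] by blast
  have graph: "rel_res A (cnj z) = graph S"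
    using rel_res_cnj_subset_graph graph_subset_rel_res_cnj resolvent_setD(2)[OF z] S(2)
    by (meson subset_antisym)
  then show "cnj z \<in> resolvent_set A" unfolding resolvent_set_def using S(1) by blast
  show "pinner J (resolvent A z u) v = pinner J u (resolvent A (cnj z) v)"
    using S(2) resolvent_eqI[OF graph] by simp
qed

end

section \<open>Realizations and their inverse\<close>

locale nevanlinna_realization =
  fixes J :: "'k::chilbert_space \<Rightarrow> 'k" and A :: "('k \<times> 'k) set" and z0 :: complex
    and \<Gamma> :: "'h::chilbert_space \<Rightarrow> 'k" and Q :: "complex \<Rightarrow> 'h \<Rightarrow> 'h"
  assumes J: "fundamental_symmetry J"
    and A: "selfadjoint_rel J A"
    and z0: "z0 \<in> resolvent_set A"
    and \<Gamma>: "cbounded_linear \<Gamma>"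
    and Q_z0: "binvertible (Q z0)"
    and realization: "\<And>z. z \<in> resolvent_set A \<Longrightarrow>
        Q z = (\<lambda>h. cadj (Q z0) h + (z - cnj z0) *\<^sub>C
                    padj J \<Gamma> (\<Gamma> h + (z - z0) *\<^sub>C resolvent A z (\<Gamma> h)))"
begin

definition Gz :: "complex \<Rightarrow> 'h \<Rightarrow> 'k" where
  "Gz z h = \<Gamma> h + (z - z0) *\<^sub>C resolvent A z (\<Gamma> h)"

definition Qhat :: "complex \<Rightarrow> 'h \<Rightarrow> 'h" where
  "Qhat z h = - binv (Q z) h"

lemmas pinner_\<Gamma> = pinner_padj[OF J \<Gamma>]
   and cinner_padj_\<Gamma> = cinner_padj_left[OF J \<Gamma>]

lemma resolvent_set_cnj: "z \<in> resolvent_set A \<Longrightarrow> cnj z \<in> resolvent_set A"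
  by (rule selfadjoint_resolvent_cnj(1)[OF J A])

lemma pinner_resolvent_cnj:
  "z \<in> resolvent_set A \<Longrightarrow> pinner J (resolvent A (cnj z) u) v = pinner J u (resolvent A z v)"
  using selfadjoint_resolvent_cnj(2)[OF J A resolvent_set_cnj] by simp

lemma Q_eq: "z \<in> resolvent_set A \<Longrightarrow> Q z h = cadj (Q z0) h + (z - cnj z0) *\<^sub>C padj J \<Gamma> (Gz z h)"
  using realization unfolding Gz_def by simp

lemma Q_z0_eq: "Q z0 h = cadj (Q z0) h + (z0 - cnj z0) *\<^sub>C padj J \<Gamma> (\<Gamma> h)"
  using Q_eq[OF z0] by (simp add: Gz_def)

lemma Gz_add: "z \<in> resolvent_set A \<Longrightarrow> Gz z (u + v) = Gz z u + Gz z v"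
  by (simp add: Gz_def cbounded_linear_add[OF \<Gamma>] cbounded_linear_add[OF resolvent_setD(1)]
      scaleC_add_right algebra_simps)

lemma Gz_scaleC: "z \<in> resolvent_set A \<Longrightarrow> Gz z (c *\<^sub>C u) = c *\<^sub>C Gz z u"
  by (simp add: Gz_def cbounded_linear_scaleC[OF \<Gamma>] cbounded_linear_scaleC[OF resolvent_setD(1)]
      scaleC_add_right scaleC_scaleC mult.commute)

lemma Gz_minus: "z \<in> resolvent_set A \<Longrightarrow> Gz z (- u) = - Gz z u"
  using Gz_scaleC[of z "-1" u] by (simp add: scaleC_minus1)

text \<open>Rewriting the realization as Q z = E + z G + (z - cnj z0) (z - z0) \<Gamma>^+ (A - z)^-1 \<Gamma>
  with G = \<Gamma>^+ \<Gamma> and E = Q z0^* - cnj z0 G, where E is selfadjoint because Q z0^* = E + z0 G,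
  exhibits Q (cnj z) as the adjoint of Q z.\<close>
lemma cinner_Q_cnj:
  assumes z: "z \<in> resolvent_set A"
  shows "cinner (Q z h) k = cinner h (Q (cnj z) k)"
proof -
  define a where "a = pinner J (\<Gamma> h) (\<Gamma> k)"
  define b where "b = pinner J (\<Gamma> h) (resolvent A (cnj z) (\<Gamma> k))"
  define c where "c = cinner h (cadj (Q z0) k)"
  have "cinner (cadj (Q z0) h) k = cinner h (Q z0 k)"
    by (metis binvertibleD(1)[OF Q_z0] cadj_cinner cinner_commute)
  also have "\<dots> = c + (cnj z0 - z0) * a"
    by (simp add: c_def a_def Q_z0_eq cinner_add_right cinner_scaleC_right pinner_\<Gamma>)
  finally have adj_z0: "cinner (cadj (Q z0) h) k = c + (cnj z0 - z0) * a" .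
  have "cinner (Q z h) k = cinner (cadj (Q z0) h) k + (z - cnj z0) * (a + (z - z0) * b)"
    by (simp add: Q_eq[OF z] Gz_def a_def b_def cinner_add_left cinner_scaleC_left cinner_padj_\<Gamma>
        pinner_add_left[OF J] pinner_scaleC_left[OF J] selfadjoint_resolvent_cnj(2)[OF J A z])
  also have "\<dots> = c + (z - z0) * (a + (z - cnj z0) * b)"
    by (simp add: adj_z0 algebra_simps)
  also have "\<dots> = cinner h (Q (cnj z) k)"
    by (simp add: Q_eq[OF resolvent_set_cnj[OF z]] Gz_def c_def a_def b_def cinner_add_right
        cinner_scaleC_right pinner_\<Gamma>[symmetric] pinner_add_right pinner_scaleC_right)
  finally show ?thesis .
qed

lemma pinner_Gz_cnj:
  assumes z: "z \<in> resolvent_set A"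
  shows "pinner J (Gz (cnj z) h) k = cinner h (padj J \<Gamma> (k + (z - cnj z0) *\<^sub>C resolvent A z k))"
  by (simp add: Gz_def pinner_add_left[OF J] pinner_scaleC_left[OF J] pinner_resolvent_cnj[OF z]
      pinner_\<Gamma>[symmetric] pinner_add_right pinner_scaleC_right)

lemma padj_Gz_cnj:
  "z \<in> resolvent_set A \<Longrightarrow>
    padj J (Gz (cnj z)) = (\<lambda>k. padj J \<Gamma> (k + (z - cnj z0) *\<^sub>C resolvent A z k))"
  by (rule padj_eqI) (rule pinner_Gz_cnj)

lemma Q_minus_Q_z0:
  assumes z: "z \<in> resolvent_set A"
  shows "Q z g - Q z0 g = (z - z0) *\<^sub>C padj J (Gz (cnj z)) (\<Gamma> g)"
proof (rule cinner_right_eqI)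
  fix x
  define a where "a = pinner J (\<Gamma> x) (\<Gamma> g)"
  define b where "b = pinner J (\<Gamma> x) (resolvent A z (\<Gamma> g))"
  have "cinner x (Q z g - Q z0 g) = (cnj z - z0) * (a + (cnj z - cnj z0) * b) - (cnj z0 - z0) * a"
    by (simp add: a_def b_def cinner_diff_right Q_eq[OF z] Q_z0_eq Gz_def cinner_add_right
        cinner_scaleC_right pinner_\<Gamma>[symmetric] pinner_add_right pinner_scaleC_right)
  also have "\<dots> = (cnj z - cnj z0) * (a + (cnj z - z0) * b)"
    by (simp add: algebra_simps)
  also have "\<dots> = cinner x ((z - z0) *\<^sub>C padj J (Gz (cnj z)) (\<Gamma> g))"
    by (simp add: padj_Gz_cnj[OF z] a_def b_def cinner_scaleC_right pinner_\<Gamma>[symmetric]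
        pinner_add_right pinner_scaleC_right)
  finally show "cinner x (Q z g - Q z0 g) = cinner x ((z - z0) *\<^sub>C padj J (Gz (cnj z)) (\<Gamma> g))" .
qed

lemma binvertible_Q_cnj:
  assumes z: "z \<in> resolvent_set A" and inv: "binvertible (Q z)"
  shows "binvertible (Q (cnj z))"
    and "cinner (binv (Q (cnj z)) x) y = cinner x (binv (Q z) y)"
proof -
  show inv_cnj: "binvertible (Q (cnj z))"
    by (rule binvertible_adjoint(1)[OF inv cinner_Q_cnj[OF z]])
  show "cinner (binv (Q (cnj z)) x) y = cinner x (binv (Q z) y)"
    using binvertible_adjoint(2)[OF inv_cnj cinner_Q_cnj[OF resolvent_set_cnj[OF z]]] by simp
qed

end

locale nevanlinna_realization_inverse = nevanlinna_realization J A z0 \<Gamma> Q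
  for J :: "'k::chilbert_space \<Rightarrow> 'k" and A z0 and \<Gamma> :: "'h::chilbert_space \<Rightarrow> 'k" and Q +
  fixes Ahat :: "('k \<times> 'k) set"
  assumes resolvent_Ahat: "\<And>z. z \<in> resolvent_set A \<Longrightarrow> binvertible (Q z) \<Longrightarrow>
      rel_res Ahat z = graph (\<lambda>k. resolvent A z k + Gz z (Qhat z (padj J (Gz (cnj z)) k)))"
begin

definition Gzhat :: "complex \<Rightarrow> 'h \<Rightarrow> 'k" where
  "Gzhat z h = \<Gamma> (Qhat z0 h) + (z - z0) *\<^sub>C resolvent Ahat z (\<Gamma> (Qhat z0 h))"

lemma resolvent_Ahat_eq:
  "z \<in> resolvent_set A \<Longrightarrow> binvertible (Q z) \<Longrightarrow>
    resolvent Ahat z = (\<lambda>k. resolvent A z k + Gz z (Qhat z (padj J (Gz (cnj z)) k)))"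
  by (rule resolvent_eqI[OF resolvent_Ahat])

lemma Gzhat_eq:
  assumes z: "z \<in> resolvent_set A" and inv: "binvertible (Q z)"
  shows "Gzhat z = Gz z \<circ> Qhat z"
proof
  fix h
  define g where "g = Qhat z0 h"
  define B where "B = binv (Q z)"
  have B: "cbounded_linear B" unfolding B_def by (rule binvertibleD(2)[OF inv])
  have "Q z0 g = - h"
    by (simp add: g_def Qhat_def cbounded_linear_minus binvertibleD(1,4)[OF Q_z0])
  have "(z - z0) *\<^sub>C Qhat z (padj J (Gz (cnj z)) (\<Gamma> g)) = - B ((z - z0) *\<^sub>C padj J (Gz (cnj z)) (\<Gamma> g))"
    by (simp add: Qhat_def B_def[symmetric] cbounded_linear_scaleC[OF B] scaleC_minus_right)
  also have "\<dots> = - B (Q z g) + B (Q z0 g)"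
    by (simp add: Q_minus_Q_z0[OF z, symmetric] cbounded_linear_diff[OF B])
  also have "\<dots> = - B h - g"
    using binvertibleD(3)[OF inv, of g]
    by (simp add: \<open>Q z0 g = - h\<close> cbounded_linear_minus[OF B] B_def[symmetric])
  finally have key: "g + (z - z0) *\<^sub>C Qhat z (padj J (Gz (cnj z)) (\<Gamma> g)) = Qhat z h"
    by (simp add: Qhat_def B_def)
  have "Gzhat z h = Gz z g + Gz z ((z - z0) *\<^sub>C Qhat z (padj J (Gz (cnj z)) (\<Gamma> g)))"
    by (simp add: Gzhat_def g_def[symmetric] resolvent_Ahat_eq[OF z inv] Gz_scaleC[OF z])
      (simp add: Gz_def scaleC_add_right algebra_simps)
  also have "\<dots> = Gz z (Qhat z h)" by (simp only: Gz_add[OF z, symmetric] key)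
  finally show "Gzhat z h = (Gz z \<circ> Qhat z) h" by simp
qed

lemma padj_Gzhat_cnj:
  assumes z: "z \<in> resolvent_set A" and inv: "binvertible (Q z)"
  shows "padj J (Gzhat (cnj z)) = (\<lambda>k. Qhat z (padj J (Gz (cnj z)) k))"
proof (rule padj_eqI)
  fix h k
  have "pinner J (Gzhat (cnj z) h) k = cinner (Qhat (cnj z) h) (padj J (Gz (cnj z)) k)"
    using Gzhat_eq[OF resolvent_set_cnj[OF z] binvertible_Q_cnj(1)[OF z inv]]
    by (simp add: pinner_Gz_cnj[OF z] padj_Gz_cnj[OF z])
  also have "\<dots> = cinner h (Qhat z (padj J (Gz (cnj z)) k))"
    by (simp add: Qhat_def cinner_minus_left cinner_minus_right binvertible_Q_cnj(2)[OF z inv])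
  finally show "pinner J (Gzhat (cnj z) h) k = cinner h (Qhat z (padj J (Gz (cnj z)) k))" .
qed

lemma resolvent_A_eq:
  assumes z: "z \<in> resolvent_set A" and inv: "binvertible (Q z)"
  shows "resolvent A z = (\<lambda>k. resolvent Ahat z k + Gzhat z (Q z (padj J (Gzhat (cnj z)) k)))"
proof
  fix k
  define p where "p = Qhat z (padj J (Gz (cnj z)) k)"
  have "Qhat z (Q z p) = - p"
    by (simp add: p_def Qhat_def cbounded_linear_minus[OF binvertibleD(1)[OF inv]]
        cbounded_linear_minus[OF binvertibleD(2)[OF inv]] binvertibleD(4)[OF inv])
  then show "resolvent A z k = resolvent Ahat z k + Gzhat z (Q z (padj J (Gzhat (cnj z)) k))"
    by (simp add: resolvent_Ahat_eq[OF z inv] padj_Gzhat_cnj[OF z inv] Gzhat_eq[OF z inv]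
        p_def[symmetric] Gz_minus[OF z])
qed

end

theorem lemma3p8:
  fixes \<kappa> :: nat
    and Q :: "complex \<Rightarrow> 'h::chilbert_space \<Rightarrow> 'h"
    and J :: "'k::chilbert_space \<Rightarrow> 'k"
    and A Ahat :: "('k \<times> 'k) set"
    and z0 :: complex
    and \<Gamma> :: "'h \<Rightarrow> 'k"
    and Gz :: "complex \<Rightarrow> 'h \<Rightarrow> 'k"
    and Qhat :: "complex \<Rightarrow> 'h \<Rightarrow> 'h"
    and \<Gamma>hat :: "'h \<Rightarrow> 'k"
    and Gzhat :: "complex \<Rightarrow> 'h \<Rightarrow> 'k"
  assumes Q_class: "gen_nevanlinna \<kappa> Q"
    and J: "fundamental_symmetry J"
    and A_sa: "selfadjoint_rel J A"
    and z0: "z0 \<in> resolvent_set A" "Im z0 > 0"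
    and \<Gamma>: "cbounded_linear \<Gamma>"
    and realization: "\<And>z. z \<in> resolvent_set A \<Longrightarrow>
        Q z = (\<lambda>h. cadj (Q z0) h + (z - cnj z0) *\<^sub>C
                    padj J \<Gamma> (\<Gamma> h + (z - z0) *\<^sub>C resolvent A z (\<Gamma> h)))"
    and Qz0_inv: "binvertible (Q z0)"
    and Qhat_def: "\<And>z. Qhat z = (\<lambda>h. - binv (Q z) h)"
    and Gz_def: "\<And>z. Gz z = (\<lambda>h. \<Gamma> h + (z - z0) *\<^sub>C resolvent A z (\<Gamma> h))"
    and \<Gamma>hat_def: "\<Gamma>hat = \<Gamma> \<circ> Qhat z0"
    and Ahat: "\<And>z. z \<in> resolvent_set A \<Longrightarrow> binvertible (Q z) \<Longrightarrow>
        rel_res Ahat z =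
          graph (\<lambda>k. resolvent A z k + Gz z (Qhat z (padj J (Gz (cnj z)) k)))"
    and Gzhat_def: "\<And>z. Gzhat z = (\<lambda>h. \<Gamma>hat h + (z - z0) *\<^sub>C resolvent Ahat z (\<Gamma>hat h))"
  shows "\<forall>z \<in> resolvent_set A \<inter> resolvent_set Ahat. binvertible (Q z) \<longrightarrow>
           Gzhat z = Gz z \<circ> Qhat z \<and>
           resolvent A z =
             (\<lambda>k. resolvent Ahat z k + Gzhat z (Q z (padj J (Gzhat (cnj z)) k)))"
proof -
  interpret R: nevanlinna_realization J A z0 \<Gamma> Q
    by (rule nevanlinna_realization.intro) (fact J A_sa z0(1) \<Gamma> Qz0_inv realization)+
  have Gz: "Gz = R.Gz" and Qhat: "Qhat = R.Qhat"
    by (simp_all add: fun_eq_iff Gz_def R.Gz_def Qhat_def R.Qhat_def)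
  interpret R: nevanlinna_realization_inverse J A z0 \<Gamma> Q Ahat
    by unfold_locales (use Ahat in \<open>simp add: Gz Qhat\<close>)
  have Gzhat: "Gzhat = R.Gzhat"
    by (simp add: fun_eq_iff Gzhat_def R.Gzhat_def \<Gamma>hat_def Qhat)
  show ?thesis
    unfolding Gz Qhat Gzhat using R.Gzhat_eq R.resolvent_A_eq by blast
qed

end
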